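(* Let $r\in\mathbb{R}$ be a root of $a_nx^n+\dots+a_1x+a_0$ with $a_0,\dots,a_n\in\mathbb{Z}$, $a_n\neq0$. Let $\alpha=k_1/k_2<r<\beta=l_1/l_2$ be rationals ($k_1,l_1\in\mathbb{Z}$, $k_2,l_2\in\mathbb{Z}\setminus\{0\}$) such that the polynomial has no root in $[\alpha,\beta]$ other than $r$, and let $a=\max\{|a_0|,\dots,|a_n|,|k_1|,|k_2|,|l_1|,|l_2|\}$. Then the finite set $$A=\Big\{\sum_{i=0}^n b_ir^i: b_i\in\mathbb{Z}\cap[-a,a]\Big\}\cup\{\alpha,\ r-\alpha,\ \sqrt{r-\alpha},\ \beta,\ \beta-r,\ \sqrt{\beta-r}\}$$ has the property that every map $f:A\to\mathbb{R}$ satisfying (1)–(3) satisfies $f(r)=r$.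
   Context: For a finite set $A\subseteq\mathbb{R}$, conditions (1)–(3) on a map $f:A\to\mathbb{R}$ are: (1) if $1\in A$ then $f(1)=1$; (2) if $a,b\in A$ and $a+b\in A$ then $f(a+b)=f(a)+f(b)$; (3) if $a,b\in A$ and $a\cdot b\in A$ then $f(a\cdot b)=f(a)\cdot f(b)$. *)

theory Defs
  imports Complex_Main
begin

text \<open>Conditions (1)-(3) for a map f defined on the finite set A (values of f outside A are irrelevant).\<close>
definition cond123 :: "real set \<Rightarrow> (real \<Rightarrow> real) \<Rightarrow> bool" where
  "cond123 A f \<longleftrightarrow>
     (1 \<in> A \<longrightarrow> f 1 = 1) \<and>
     (\<forall>a\<in>A. \<forall>b\<in>A. a + b \<in> A \<longrightarrow> f (a + b) = f a + f b) \<and>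
     (\<forall>a\<in>A. \<forall>b\<in>A. a * b \<in> A \<longrightarrow> f (a * b) = f a * f b)"

end

theory Submission
  imports Defs "HOL-Library.FuncSet"
begin

text \<open>
  A map f satisfying (1)-(3) on A fixes every integer in A (additivity from f 1 = 1), hence the
  rationals \<alpha> and \<beta> (multiplicativity applied to \<alpha> k2 = k1 and \<beta> l2 = l1). Since
  r - \<alpha> and \<beta> - r are squares of elements of A, their images are squares, so
  \<alpha> \<le> f r \<le> \<beta>. Finally A contains all powers, monomials and partial sums of the
  defining polynomial, so f commutes with its evaluation at r and f r is a root in [\<alpha>, \<beta>];
  by the isolation hypothesis f r = r.
\<close>

lemma cond123_one: "cond123 A f \<Longrightarrow> 1 \<in> A \<Longrightarrow> f 1 = 1"
  unfolding cond123_def by blast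

lemma cond123_add:
  "cond123 A f \<Longrightarrow> x \<in> A \<Longrightarrow> y \<in> A \<Longrightarrow> x + y \<in> A \<Longrightarrow> f (x + y) = f x + f y"
  unfolding cond123_def by blast

lemma cond123_mult:
  "cond123 A f \<Longrightarrow> x \<in> A \<Longrightarrow> y \<in> A \<Longrightarrow> x * y \<in> A \<Longrightarrow> f (x * y) = f x * f y"
  unfolding cond123_def by blast

lemma cond123_zero: "cond123 A f \<Longrightarrow> 0 \<in> A \<Longrightarrow> f 0 = 0"
  using cond123_add[of A f 0 0] by simp

lemma cond123_of_nat:
  assumes "cond123 A f" and "\<And>k. k \<le> m \<Longrightarrow> real k \<in> A"
  shows "f (real m) = real m"
  using assms(2)
proof (induction m)
  case 0
  then show ?case using cond123_zero[OF assms(1)] by fastforce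
next
  case (Suc m)
  have one: "1 \<in> A" using Suc.prems[of 1] by simp
  have "real m + 1 \<in> A" using Suc.prems[of "Suc m"] by (simp add: add.commute)
  then have "f (real m + 1) = f (real m) + f 1"
    by (intro cond123_add[OF assms(1)]) (use Suc.prems one in auto)
  then show ?case using Suc cond123_one[OF assms(1) one] by (simp add: add.commute)
qed

lemma cond123_of_int:
  assumes f: "cond123 A f" and ints: "\<And>k. \<bar>k\<bar> \<le> a \<Longrightarrow> of_int k \<in> A" and "\<bar>m\<bar> \<le> a"
  shows "f (of_int m) = of_int m"
proof -
  have nats: "real k \<in> A" if "int k \<le> a" for k
    using ints[of "int k"] that by simp
  have nat_fixed: "f (real k) = real k" if "int k \<le> a" for k
    by (rule cond123_of_nat[OF f]) (use that nats in force)
  show ?thesis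
  proof (cases "0 \<le> m")
    case True
    then show ?thesis using nat_fixed[of "nat m"] \<open>\<bar>m\<bar> \<le> a\<close> by simp
  next
    case False
    have "f (of_int m + of_int (- m)) = f (of_int m) + f (of_int (- m))"
      by (rule cond123_add[OF f]) (use ints[of m] ints[of "- m"] ints[of 0] \<open>\<bar>m\<bar> \<le> a\<close> in auto)
    moreover have "f 0 = 0" using cond123_zero[OF f] ints[of 0] \<open>\<bar>m\<bar> \<le> a\<close> by simp
    moreover have "f (of_int (- m)) = of_int (- m)"
      using nat_fixed[of "nat (- m)"] False \<open>\<bar>m\<bar> \<le> a\<close> by simp
    ultimately show ?thesis by simp
  qed
qed

lemma cond123_fixes_factor:
  assumes "cond123 A f" "x \<in> A" "y \<in> A" "x * y \<in> A"
    and "f y = y" "f (x * y) = x * y" "y \<noteq> 0"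
  shows "f x = x"
  using cond123_mult[OF assms(1-4)] assms(5-7) by simp

lemma cond123_fixes_int_quotient:
  assumes f: "cond123 A f" and ints: "\<And>k. \<bar>k\<bar> \<le> a \<Longrightarrow> of_int k \<in> A"
    and "\<bar>p\<bar> \<le> a" "\<bar>q\<bar> \<le> a" "q \<noteq> 0" "of_int p / of_int q \<in> A"
  shows "f (of_int p / of_int q) = of_int p / of_int q"
proof -
  have q: "of_int p / of_int q * of_int q = (of_int p :: real)" using \<open>q \<noteq> 0\<close> by simp
  show ?thesis
    by (rule cond123_fixes_factor[OF f, of _ "of_int q"])
      (use assms q ints cond123_of_int[OF f ints] in auto)
qed

lemma cond123_mono:
  assumes f: "cond123 A f" and "u \<in> A" "v \<in> A" "v - u \<in> A" "sqrt (v - u) \<in> A" "u \<le> v"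
  shows "f u \<le> f v"
proof -
  have sq: "sqrt (v - u) * sqrt (v - u) = v - u" using \<open>u \<le> v\<close> by simp
  have "f (v - u) = f (sqrt (v - u)) * f (sqrt (v - u))"
    using cond123_mult[OF f, of "sqrt (v - u)" "sqrt (v - u)"] sq assms by simp
  then have "0 \<le> f (v - u)" by simp
  moreover have "f (u + (v - u)) = f u + f (v - u)"
    by (rule cond123_add[OF f]) (use assms in auto)
  ultimately show ?thesis by simp
qed

lemma cond123_power:
  assumes f: "cond123 A f" and "\<And>i. i \<le> j \<Longrightarrow> x ^ i \<in> A"
  shows "f (x ^ j) = f x ^ j"
  using assms(2)
proof (induction j)
  case 0
  then show ?case using cond123_one[OF f] by fastforce
next
  case (Suc j)
  have "f (x * x ^ j) = f x * f (x ^ j)"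
    by (rule cond123_mult[OF f]) (use Suc.prems[of 1] Suc.prems[of j] Suc.prems[of "Suc j"] in auto)
  then show ?case using Suc by simp
qed

lemma cond123_poly_eval:
  fixes c :: "nat \<Rightarrow> real"
  assumes f: "cond123 A f"
    and "\<And>i. i \<le> j \<Longrightarrow> x ^ i \<in> A" "\<And>i. i \<le> j \<Longrightarrow> c i \<in> A" "\<And>i. i \<le> j \<Longrightarrow> f (c i) = c i"
    and "\<And>i. i \<le> j \<Longrightarrow> c i * x ^ i \<in> A" "\<And>i. i \<le> j \<Longrightarrow> (\<Sum>k\<le>i. c k * x ^ k) \<in> A"
  shows "f (\<Sum>i\<le>j. c i * x ^ i) = (\<Sum>i\<le>j. c i * f x ^ i)"
proof -
  have monomial: "f (c i * x ^ i) = c i * f x ^ i" if "i \<le> j" for i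
    using cond123_mult[OF f, of "c i" "x ^ i"] cond123_power[OF f, of i x] assms(2-5) that by simp
  have "f (\<Sum>i\<le>m. c i * x ^ i) = (\<Sum>i\<le>m. c i * f x ^ i)" if "m \<le> j" for m
    using that
  proof (induction m)
    case 0
    then show ?case using monomial[of 0] by simp
  next
    case (Suc m)
    have "f ((\<Sum>i\<le>m. c i * x ^ i) + c (Suc m) * x ^ Suc m)
        = f (\<Sum>i\<le>m. c i * x ^ i) + f (c (Suc m) * x ^ Suc m)"
      by (rule cond123_add[OF f]) (use Suc.prems assms(5)[of "Suc m"] assms(6)[of m] assms(6)[of "Suc m"] in auto)
    then show ?case using Suc monomial[of "Suc m"] by simp
  qed
  then show ?thesis by simp
qed

definition int_poly_values :: "nat \<Rightarrow> int \<Rightarrow> real \<Rightarrow> real set" where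
  "int_poly_values n a x = {(\<Sum>i\<le>n. of_int (b i) * x ^ i) | b :: nat \<Rightarrow> int. \<forall>i\<le>n. \<bar>b i\<bar> \<le> a}"

lemma finite_int_poly_values: "finite (int_poly_values n a x)"
proof -
  let ?eval = "\<lambda>b. \<Sum>i\<le>n. of_int (b i) * x ^ i"
  have "int_poly_values n a x \<subseteq> ?eval ` PiE {..n} (\<lambda>_. {-a..a})"
  proof
    fix y assume "y \<in> int_poly_values n a x"
    then obtain b where b: "\<forall>i\<le>n. \<bar>b i\<bar> \<le> a" and y: "y = ?eval b"
      unfolding int_poly_values_def by blast
    have "restrict b {..n} \<in> PiE {..n} (\<lambda>_. {-a..a})" using b by (auto simp: abs_le_iff)
    moreover have "?eval (restrict b {..n}) = y" unfolding y by (intro sum.cong) auto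
    ultimately show "y \<in> ?eval ` PiE {..n} (\<lambda>_. {-a..a})" by blast
  qed
  then show ?thesis by (rule finite_subset) (intro finite_imageI finite_PiE; simp)
qed

lemma partial_sum_in_int_poly_values:
  assumes "j \<le> n" and "\<And>i. i \<le> j \<Longrightarrow> \<bar>b i\<bar> \<le> a"
  shows "(\<Sum>i\<le>j. of_int (b i) * x ^ i) \<in> int_poly_values n a x"
proof -
  define b' where "b' i = (if i \<le> j then b i else 0)" for i
  have eq: "(\<Sum>i\<le>j. of_int (b i) * x ^ i) = (\<Sum>i\<le>n. of_int (b' i) * x ^ i)"
    unfolding b'_def using \<open>j \<le> n\<close>
    by (intro sum.mono_neutral_cong_left) auto
  have "0 \<le> a" using assms(2)[of 0] abs_ge_zero[of "b 0"] by linarith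
  then have "\<forall>i\<le>n. \<bar>b' i\<bar> \<le> a" unfolding b'_def using assms(2) by auto
  with eq show ?thesis unfolding int_poly_values_def by blast
qed

lemma monomial_in_int_poly_values:
  assumes "j \<le> n" and "\<bar>m\<bar> \<le> a"
  shows "of_int m * x ^ j \<in> int_poly_values n a x"
proof -
  have "(\<Sum>i\<le>j. of_int (if i = j then m else 0) * x ^ i) = (\<Sum>i\<le>j. if i = j then of_int m * x ^ i else 0)"
    by (intro sum.cong) auto
  also have "\<dots> = of_int m * x ^ j" by simp
  finally have "(\<Sum>i\<le>j. of_int (if i = j then m else 0) * x ^ i) = of_int m * x ^ j" .
  moreover have "0 \<le> a" using assms(2) abs_ge_zero[of m] by linarith
  ultimately show ?thesis
    using partial_sum_in_int_poly_values[OF assms(1), of "\<lambda>i. if i = j then m else 0" a x] assms(2)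
    by simp
qed

lemma of_int_in_int_poly_values: "\<bar>m\<bar> \<le> a \<Longrightarrow> of_int m \<in> int_poly_values n a x"
  using monomial_in_int_poly_values[of 0 n m a x] by simp

lemma power_in_int_poly_values: "j \<le> n \<Longrightarrow> 1 \<le> a \<Longrightarrow> x ^ j \<in> int_poly_values n a x"
  using monomial_in_int_poly_values[of j n 1 a x] by simp

lemma cond123_int_poly_eval:
  assumes f: "cond123 A f" and sub: "int_poly_values n a x \<subseteq> A"
    and c: "\<forall>i\<le>n. \<bar>c i\<bar> \<le> a" and "1 \<le> a"
  shows "f (\<Sum>i\<le>n. of_int (c i) * x ^ i) = (\<Sum>i\<le>n. of_int (c i) * f x ^ i)"
proof (rule cond123_poly_eval[OF f])
  have ints: "of_int k \<in> A" if "\<bar>k\<bar> \<le> a" for k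
    using of_int_in_int_poly_values[OF that] sub by blast
  fix i assume "i \<le> n"
  then show "x ^ i \<in> A" "of_int (c i) \<in> A" "f (of_int (c i)) = of_int (c i)"
    "of_int (c i) * x ^ i \<in> A" "(\<Sum>k\<le>i. of_int (c k) * x ^ k) \<in> A"
    using power_in_int_poly_values[of i n a x] monomial_in_int_poly_values[of i n "c i" a x]
      partial_sum_in_int_poly_values[of i n c a x] ints cond123_of_int[OF f ints] c \<open>1 \<le> a\<close> sub
    by auto
qed

lemma cond123_fixes_isolated_root:
  fixes c :: "nat \<Rightarrow> int" and k1 k2 l1 l2 a :: int
  assumes f: "cond123 A f"
    and sub: "int_poly_values n a r \<union> {\<alpha>, r - \<alpha>, sqrt (r - \<alpha>), \<beta>, \<beta> - r, sqrt (\<beta> - r)} \<subseteq> A"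
    and \<alpha>: "\<alpha> = of_int k1 / of_int k2" "k2 \<noteq> 0" and \<beta>: "\<beta> = of_int l1 / of_int l2" "l2 \<noteq> 0"
    and bounds: "\<forall>i\<le>n. \<bar>c i\<bar> \<le> a" "\<bar>k1\<bar> \<le> a" "\<bar>k2\<bar> \<le> a" "\<bar>l1\<bar> \<le> a" "\<bar>l2\<bar> \<le> a"
    and "c n \<noteq> 0" and root: "(\<Sum>i\<le>n. of_int (c i) * r ^ i) = 0" and "\<alpha> < r" "r < \<beta>"
    and isolated: "\<forall>x \<in> {\<alpha>..\<beta>}. (\<Sum>i\<le>n. of_int (c i) * x ^ i) = 0 \<longrightarrow> x = r"
  shows "f r = r"
proof -
  have "1 \<le> a" using bounds(3) \<open>k2 \<noteq> 0\<close> by linarith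
  have "n \<noteq> 0" using \<open>c n \<noteq> 0\<close> root by (cases n) auto
  have ints: "of_int m \<in> A" if "\<bar>m\<bar> \<le> a" for m
    using of_int_in_int_poly_values[OF that] sub by blast
  have "r \<in> A"
    using power_in_int_poly_values[of 1 n a r] \<open>n \<noteq> 0\<close> \<open>1 \<le> a\<close> sub by auto
  have "f \<alpha> = \<alpha>" "f \<beta> = \<beta>"
    using cond123_fixes_int_quotient[OF f ints] \<alpha> \<beta> bounds sub by auto
  moreover have "f \<alpha> \<le> f r" "f r \<le> f \<beta>"
    using cond123_mono[OF f] \<open>\<alpha> < r\<close> \<open>r < \<beta>\<close> \<open>r \<in> A\<close> sub by auto
  ultimately have "f r \<in> {\<alpha>..\<beta>}" by simp
  moreover have "(\<Sum>i\<le>n. of_int (c i) * f r ^ i) = f (\<Sum>i\<le>n. of_int (c i) * r ^ i)"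
    using cond123_int_poly_eval[OF f _ bounds(1) \<open>1 \<le> a\<close>] sub by simp
  then have "(\<Sum>i\<le>n. of_int (c i) * f r ^ i) = 0"
    using root cond123_zero[OF f] ints[of 0] \<open>1 \<le> a\<close> by simp
  ultimately show ?thesis using isolated by blast
qed

theorem mainTheorem8:
  fixes n :: nat and c :: "nat \<Rightarrow> int" and r :: real
    and k1 k2 l1 l2 :: int
  assumes "c n \<noteq> 0"
    and "(\<Sum>i\<le>n. of_int (c i) * r ^ i) = 0"
    and "k2 \<noteq> 0" and "l2 \<noteq> 0"
    and "of_int k1 / of_int k2 < r" and "r < of_int l1 / of_int l2"
    and "\<forall>x \<in> {of_int k1 / of_int k2 .. of_int l1 / of_int l2}.
            (\<Sum>i\<le>n. of_int (c i) * x ^ i) = 0 \<longrightarrow> x = r"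
  shows "let \<alpha> = (of_int k1 / of_int k2 :: real);
             \<beta> = (of_int l1 / of_int l2 :: real);
             a = Max ((\<lambda>i. \<bar>c i\<bar>) ` {..n} \<union> {\<bar>k1\<bar>, \<bar>k2\<bar>, \<bar>l1\<bar>, \<bar>l2\<bar>});
             A = {(\<Sum>i\<le>n. of_int (b i) * r ^ i) | b :: nat \<Rightarrow> int. \<forall>i\<le>n. \<bar>b i\<bar> \<le> a}
                 \<union> {\<alpha>, r - \<alpha>, sqrt (r - \<alpha>), \<beta>, \<beta> - r, sqrt (\<beta> - r)}
         in finite A \<and> (\<forall>f. cond123 A f \<longrightarrow> f r = r)"
proof -
  define a where "a = Max ((\<lambda>i. \<bar>c i\<bar>) ` {..n} \<union> {\<bar>k1\<bar>, \<bar>k2\<bar>, \<bar>l1\<bar>, \<bar>l2\<bar>})"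
  have "x \<le> a" if "x \<in> (\<lambda>i. \<bar>c i\<bar>) ` {..n} \<union> {\<bar>k1\<bar>, \<bar>k2\<bar>, \<bar>l1\<bar>, \<bar>l2\<bar>}" for x
    unfolding a_def using that by (intro Max_ge) auto
  then have bounds: "\<forall>i\<le>n. \<bar>c i\<bar> \<le> a" "\<bar>k1\<bar> \<le> a" "\<bar>k2\<bar> \<le> a" "\<bar>l1\<bar> \<le> a" "\<bar>l2\<bar> \<le> a"
    by auto
  show ?thesis
    unfolding Let_def a_def[symmetric] int_poly_values_def[symmetric]
    using finite_int_poly_values cond123_fixes_isolated_root[OF _ order.refl _ _ _ _ bounds] assms
    by auto
qed

end
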